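(* Let $(D,\subseteq)$ be a complete lattice and let $T:D\to D$ be a contracting operator. Then $T$ is order independent in the sense of Definition I if and only if it is order independent in the sense of Definition II.
   Context: Let $(D,\subseteq)$ be a complete lattice with largest element $\top$. For an operator $T:D\to D$: $T$ is contracting if $T(G)\subseteq G$ for all $G$; a fixpoint of $T$ is $G$ with $T(G)=G$. Iterations: $T^0:=\top$, $T^{\alpha+1}:=T(T^\alpha)$, $T^\beta:=\bigcap_{\alpha<\beta}T^\alpha$ for limit $\beta$. The closure ordinal $\alpha_T$ is the least $\alpha$ with $T^{\alpha+1}=T^\alpha$ (if it exists) and $T^{\alpha_T}$ is then the outcome of $T$ (for contracting $T$ the outcome always exists). Definition I (for contracting $T$): $T$ is order independent if $R^{\alpha_R}=T^{\alpha_T}$ for every operator $R:D\to D$ such that for all ordinals $\alpha$: (a) $T(R^\alpha)\subseteq R(R^\alpha)\subseteq R^\alpha$, and (b) if $T(R^\alpha)\subsetneq R^\alpha$ then $R(R^\alpha)\subsetneq R^\alpha$. Definition II (for arbitrary $T$): an operator $R:D\to D$ is a relaxation of $T$ if for all ordinals $\alpha$: (1) $T(R^\alpha)\subseteq R(R^\alpha)$; (2) if $T(R^\alpha)\subseteq R^\alpha$ then $R(R^\alpha)\subseteq R^\alpha$; (3) if $R^\alpha$ is a fixpoint of $R$ then $R^\alpha$ is a fixpoint of $T$. $T$ is order independent if the set $\{G\mid G$ is the outcome of some relaxation of $T\}$ has at most one element. *)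

theory Defs
  imports Main
begin

text \<open>Ordinals are represented by the elements of a well-ordered type 'o
(assumed large enough in the main theorem).  The transfinite iteration
T^0 = top, T^(a+1) = T(T^a), T^b = Inf of T^a for a < b at limits.
Note that T^0 is Inf of the empty family, i.e. top.\<close>

definition ord_iter_step ::
  "('a::complete_lattice \<Rightarrow> 'a) \<Rightarrow> (('o::wellorder) \<Rightarrow> 'a) \<Rightarrow> 'o \<Rightarrow> 'a" where
  "ord_iter_step T f a =
     (if \<exists>b. b < a \<and> (\<forall>c. c < a \<longrightarrow> c \<le> b)
      then T (f (GREATEST b. b < a))
      else Inf (f ` {b. b < a}))"

definition iter :: "('a::complete_lattice \<Rightarrow> 'a) \<Rightarrow> 'o::wellorder \<Rightarrow> 'a" where
  "iter T = wfrec {(x, y). x < y} (ord_iter_step T)"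

definition contracting :: "('a::complete_lattice \<Rightarrow> 'a) \<Rightarrow> bool" where
  "contracting T \<longleftrightarrow> (\<forall>G. T G \<le> G)"

definition closure_ordinal :: "'o::wellorder itself \<Rightarrow> ('a::complete_lattice \<Rightarrow> 'a) \<Rightarrow> 'o \<Rightarrow> bool" where
  "closure_ordinal _ T a \<longleftrightarrow>
     T (iter T a) = iter T a \<and> (\<forall>b. b < a \<longrightarrow> T (iter T b) \<noteq> (iter T b :: 'a))"

definition is_outcome :: "'o::wellorder itself \<Rightarrow> ('a::complete_lattice \<Rightarrow> 'a) \<Rightarrow> 'a \<Rightarrow> bool" where
  "is_outcome ot T G \<longleftrightarrow> (\<exists>a::'o. closure_ordinal ot T a \<and> G = iter T a)"

definition outcome :: "'o::wellorder itself \<Rightarrow> ('a::complete_lattice \<Rightarrow> 'a) \<Rightarrow> 'a" where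
  "outcome ot T = iter T (LEAST a::'o. T (iter T a) = iter T a)"

definition order_independent_I :: "'o::wellorder itself \<Rightarrow> ('a::complete_lattice \<Rightarrow> 'a) \<Rightarrow> bool" where
  "order_independent_I ot T \<longleftrightarrow>
     (\<forall>R. (\<forall>a::'o.
            T (iter R a) \<le> R (iter R a) \<and> R (iter R a) \<le> iter R a \<and>
            (T (iter R a) < iter R a \<longrightarrow> R (iter R a) < iter R a))
          \<longrightarrow> outcome ot R = outcome ot T)"

definition relaxation :: "'o::wellorder itself \<Rightarrow> ('a::complete_lattice \<Rightarrow> 'a) \<Rightarrow> ('a \<Rightarrow> 'a) \<Rightarrow> bool" where
  "relaxation _ T R \<longleftrightarrow>
     (\<forall>a::'o.
        T (iter R a) \<le> R (iter R a) \<and>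
        (T (iter R a) \<le> iter R a \<longrightarrow> R (iter R a) \<le> iter R a) \<and>
        (R (iter R a) = iter R a \<longrightarrow> T (iter R a) = iter R a))"

definition order_independent_II :: "'o::wellorder itself \<Rightarrow> ('a::complete_lattice \<Rightarrow> 'a) \<Rightarrow> bool" where
  "order_independent_II ot T \<longleftrightarrow>
     (\<forall>G H. G \<in> {X. \<exists>R. relaxation ot T R \<and> is_outcome ot R X} \<longrightarrow>
            H \<in> {X. \<exists>R. relaxation ot T R \<and> is_outcome ot R X} \<longrightarrow> G = H)"

end

theory Submission
  imports Defs
begin

text \<open>If T is contracting and R(G) \<subseteq> G, then R(G) \<subset> G follows from T(G) \<subset> G exactly
when every fixpoint of R is one of T; so conditions (a) and (b) of Definition I describe
precisely the relaxations of T. The iterates of such an R descend, strictly so until a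
fixpoint is reached; as there are more ordinals than elements of D, every relaxation
(T itself included) has an outcome. Uniqueness of the outcomes of relaxations thus means
that every relaxation has the outcome of T, which is Definition I.\<close>

lemma iter_unfold: "iter T a = ord_iter_step T (iter T) (a::'o::wellorder)"
proof -
  have wf: "wf {(x, y). x < (y::'o)}"
    using wf by (simp add: wf_def)
  have "adm_wf {(x, y). x < (y::'o)} (ord_iter_step T)"
    unfolding adm_wf_def
  proof (intro allI impI)
    fix f g :: "'o \<Rightarrow> 'a" and x :: 'o
    assume agree: "\<forall>z. (z, x) \<in> {(x, y). x < y} \<longrightarrow> f z = g z"
    show "ord_iter_step T f x = ord_iter_step T g x"
    proof (cases "\<exists>b. b < x \<and> (\<forall>c. c < x \<longrightarrow> c \<le> b)")
      case True
      then obtain b where b: "b < x" "\<forall>c. c < x \<longrightarrow> c \<le> b" by blast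
      have "(GREATEST b. b < x) = b"
        by (rule Greatest_equality) (use b in auto)
      then show ?thesis
        using True agree b by (simp add: ord_iter_step_def)
    next
      case False
      have "f ` {b. b < x} = g ` {b. b < x}"
        using agree by auto
      then show ?thesis
        by (simp only: ord_iter_step_def if_not_P[OF False])
    qed
  qed
  then show ?thesis
    unfolding iter_def by (subst wfrec_fixpoint[OF wf]) simp_all
qed

lemma iter_successor:
  assumes "b < a" and "\<forall>c. c < a \<longrightarrow> c \<le> b"
  shows "iter T (a::'o::wellorder) = T (iter T b)"
proof -
  have "(GREATEST b. b < a) = b"
    by (rule Greatest_equality) (use assms in auto)
  then show ?thesis
    using assms by (subst iter_unfold) (auto simp: ord_iter_step_def)
qed

lemma iter_limit:
  assumes "\<not> (\<exists>b. b < a \<and> (\<forall>c. c < a \<longrightarrow> c \<le> b))"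
  shows "iter T (a::'o::wellorder) = Inf (iter T ` {b. b < a})"
  by (subst iter_unfold) (simp only: ord_iter_step_def if_not_P[OF assms])

lemma iter_antimono:
  assumes descending: "\<forall>a::'o::wellorder. R (iter R a) \<le> iter R a"
    and "b \<le> a"
  shows "iter R a \<le> iter R (b::'o)"
  using assms(2)
proof (induction a rule: less_induct)
  case (less a)
  show ?case
  proof (cases "b = a")
    case False
    with less.prems have "b < a" by simp
    show ?thesis
    proof (cases "\<exists>p. p < a \<and> (\<forall>c. c < a \<longrightarrow> c \<le> p)")
      case True
      then obtain p where p: "p < a" "\<forall>c. c < a \<longrightarrow> c \<le> p" by blast
      have "iter R a = R (iter R p)"
        by (rule iter_successor[OF p])
      also have "\<dots> \<le> iter R p"
        using descending by blast
      also have "\<dots> \<le> iter R b"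
        using less.IH[OF p(1)] p(2) \<open>b < a\<close> by blast
      finally show ?thesis .
    next
      case False
      then have "iter R a = Inf (iter R ` {b. b < a})"
        by (rule iter_limit)
      also have "\<dots> \<le> iter R b"
        using \<open>b < a\<close> by (auto intro: Inf_lower)
      finally show ?thesis .
    qed
  qed simp
qed

lemma iter_strict_antimono:
  assumes descending: "\<forall>a::'o::wellorder. R (iter R a) \<le> iter R a"
    and "b < a" and "R (iter R b) \<noteq> iter R b"
  shows "iter R a < iter R (b::'o)"
proof -
  define s where "s = (LEAST c. b < c)"
  have "b < s"
    unfolding s_def by (rule LeastI[of _ a]) (rule \<open>b < a\<close>)
  have "\<forall>c. c < s \<longrightarrow> c \<le> b"
    unfolding s_def using not_less_Least by (blast intro: leI)
  have "s \<le> a"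
    unfolding s_def by (rule Least_le) (rule \<open>b < a\<close>)
  then have "iter R a \<le> iter R s"
    by (rule iter_antimono[OF descending])
  also have "\<dots> = R (iter R b)"
    by (rule iter_successor) fact+
  also have "\<dots> < iter R b"
    using descending assms(3) by (simp add: order.strict_iff_order)
  finally show ?thesis .
qed

lemma iter_fixpoint_exists:
  fixes R :: "'a::complete_lattice \<Rightarrow> 'a"
  assumes card: "(card_of (UNIV :: 'a set), card_of (UNIV :: 'o::wellorder set)) \<in> ordLess"
    and descending: "\<forall>a::'o. R (iter R a) \<le> iter R a"
  shows "\<exists>a::'o. R (iter R a) = iter R a"
proof (rule ccontr)
  assume "\<not> (\<exists>a::'o. R (iter R a) = iter R a)"
  then have strict: "iter R a < iter R b" if "b < a" for a b :: 'o
    using iter_strict_antimono[OF descending that] by blast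
  have "inj (iter R :: 'o \<Rightarrow> 'a)"
  proof (rule injI)
    fix x y :: 'o
    assume "iter R x = iter R y"
    then show "x = y"
      using strict[of x y] strict[of y x] by (cases x y rule: linorder_cases) auto
  qed
  then have "(card_of (UNIV :: 'o set), card_of (UNIV :: 'a set)) \<in> ordLeq"
    using card_of_ordLeq by blast
  then show False
    using not_ordLess_ordLeq[OF card] by blast
qed

lemma is_outcome_iff:
  fixes R :: "'a::complete_lattice \<Rightarrow> 'a" and ot :: "'o::wellorder itself"
  shows "is_outcome ot R X \<longleftrightarrow> (\<exists>a::'o. R (iter R a) = iter R a) \<and> X = outcome ot R"
proof
  assume "is_outcome ot R X"
  then obtain a :: 'o where a: "closure_ordinal ot R a" "X = iter R a"
    unfolding is_outcome_def by blast
  then have fix_a: "R (iter R a) = iter R a" and below: "\<forall>b<a. R (iter R b) \<noteq> iter R b"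
    by (simp_all add: closure_ordinal_def)
  have "(LEAST a::'o. R (iter R a) = iter R a) = a"
    by (rule Least_equality[where P = "\<lambda>a. R (iter R a) = iter R a"])
      (use fix_a below leI in blast)+
  with a(2) fix_a show "(\<exists>a::'o. R (iter R a) = iter R a) \<and> X = outcome ot R"
    by (auto simp: outcome_def)
next
  assume "(\<exists>a::'o. R (iter R a) = iter R a) \<and> X = outcome ot R"
  then have fixpoint: "\<exists>a::'o. R (iter R a) = iter R a" and X: "X = outcome ot R"
    by simp_all
  have "closure_ordinal ot R (LEAST a::'o. R (iter R a) = iter R a)"
    unfolding closure_ordinal_def using LeastI_ex[OF fixpoint] not_less_Least by blast
  then show "is_outcome ot R X"
    unfolding is_outcome_def X outcome_def by blast
qed

lemma relaxation_iff_contracting: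
  fixes ot :: "'o::wellorder itself"
  assumes "contracting T"
  shows "relaxation ot T R \<longleftrightarrow>
    (\<forall>a::'o. T (iter R a) \<le> R (iter R a) \<and> R (iter R a) \<le> iter R a \<and>
       (T (iter R a) < iter R a \<longrightarrow> R (iter R a) < iter R a))"
proof -
  have contr: "T G \<le> G" for G
    using assms by (simp add: contracting_def)
  have "(T G \<le> R G \<and> (T G \<le> G \<longrightarrow> R G \<le> G) \<and> (R G = G \<longrightarrow> T G = G)) \<longleftrightarrow>
      (T G \<le> R G \<and> R G \<le> G \<and> (T G < G \<longrightarrow> R G < G))" for G
    using contr[of G] by (metis order.strict_iff_order order_trans)
  then show ?thesis
    unfolding relaxation_def by simp
qed

lemma relaxation_has_outcome:
  fixes T :: "'a::complete_lattice \<Rightarrow> 'a" and ot :: "'o::wellorder itself"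
  assumes "(card_of (UNIV :: 'a set), card_of (UNIV :: 'o set)) \<in> ordLess"
    and "contracting T" and "relaxation ot T R"
  shows "is_outcome ot R (outcome ot R)"
proof -
  have "\<forall>a::'o. R (iter R a) \<le> iter R a"
    using assms(3) relaxation_iff_contracting[OF assms(2)] by blast
  then show ?thesis
    using iter_fixpoint_exists[OF assms(1)] by (simp add: is_outcome_iff)
qed

theorem mainTheorem3:
  fixes T :: "'a::complete_lattice \<Rightarrow> 'a" and ot :: "'o::wellorder itself"
  assumes "(card_of (UNIV :: 'a set), card_of (UNIV :: 'o set)) \<in> ordLess"
    and "contracting T"
  shows "order_independent_I ot T \<longleftrightarrow> order_independent_II ot T"
proof -
  note relaxation_iff = relaxation_iff_contracting[OF assms(2), where ot = ot]
  note has_outcome = relaxation_has_outcome[OF assms]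
  have outcomes: "{X. \<exists>R. relaxation ot T R \<and> is_outcome ot R X} =
      outcome ot ` {R. relaxation ot T R}"
    by (auto dest: is_outcome_iff[THEN iffD1] intro: has_outcome)
  have "order_independent_II ot T \<longleftrightarrow>
      (\<forall>R\<in>{R. relaxation ot T R}. \<forall>R'\<in>{R. relaxation ot T R}. outcome ot R = outcome ot R')"
    unfolding order_independent_II_def outcomes by blast
  also have "\<dots> \<longleftrightarrow> (\<forall>R. relaxation ot T R \<longrightarrow> outcome ot R = outcome ot T)"
  proof -
    have "relaxation ot T T"
      using assms(2) by (simp add: relaxation_def contracting_def)
    then show ?thesis
      by (metis mem_Collect_eq)
  qed
  also have "\<dots> \<longleftrightarrow> order_independent_I ot T"
    unfolding order_independent_I_def relaxation_iff ..
  finally show ?thesis ..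
qed

end
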